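(* Let $S$ be an infinite set, $\mathcal{F}\subseteq 2^S$ nontrivial and closed under finite unions, and let $(C,\mathbf{A})$ be a conditional classification problem with $\mathbf{A}=(A_1,\dots,A_k)$. Then the following are equivalent: (i) $\mathbf{A}\in\mathit{ccore}_k(C,\mathcal{F})$; (ii) for all $1\le i\le k$: $A_i\notin\mathit{cclass}_1(C,\mathcal{F})$ and $A_i\in\mathit{ccohesive}(S\setminus C,\mathcal{F})$.
   Context: $\mathcal{F}$ is nontrivial if $\emptyset,S\in\mathcal{F}$ and for all $Q\in\mathcal{F}$ and finite $E\subseteq S$ both $Q\cup E\in\mathcal{F}$ and $Q\setminus E\in\mathcal{F}$. A classification problem is a vector $(A_1,\dots,A_k)$, $k\ge1$, of pairwise disjoint infinite subsets of $S$, of length $k$. A conditional classification problem is a pair $(C,\mathbf{A})$ with $C\subseteq S$, $\mathbf{A}$ a classification problem and $C$ disjoint from all components of $\mathbf{A}$. For vectors $\mathbf{B}=(B_1,\dots,B_m)$, $\mathbf{Q}=(Q_1,\dots,Q_k)$, $\mathbf{B}\le\mathbf{Q}$ means $1\le m\le k$ and there is an injective $\sigma:\{1,\dots,m\}\to\{1,\dots,k\}$ with $B_i\subseteq Q_{\sigma(i)}$. An $\mathcal{F}$-partition is a vector of pairwise disjoint members of $\mathcal{F}$ whose union is $S$. $\mathit{cclass}_k(C,\mathcal{F})$ is the set of classification problems $\mathbf{A}$ of length $k$ such that $(C,\mathbf{A})$ is a conditional classification problem and there is an $\mathcal{F}$-partition $(Q_0,Q_1,\dots,Q_k)$ with $C\subseteq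 Q_0$ and $\mathbf{A}\le(Q_1,\dots,Q_k)$ (a single set $A$ is identified with the vector $(A)$). $\mathit{ccore}_k(C,\mathcal{F})$ is the set of classification problems $\mathbf{A}$ of length $k$ with $(C,\mathbf{A})$ a conditional classification problem such that every classification problem $\mathbf{A}'\le\mathbf{A}$ (any length $\ge1$) satisfies $\mathbf{A}'\notin\mathit{cclass}_{|\mathbf{A}'|}(C,\mathcal{F})$. For $D\subseteq S$, $A\in\mathit{ccohesive}(D,\mathcal{F})$ iff $A$ is infinite and for every $Q\subseteq D$ with $Q\in\mathcal{F}$ and $S\setminus Q\in\mathcal{F}$, either $A\cap Q$ or $A\setminus Q$ is finite. *)

theory Defs
  imports Main
begin

text \<open>Vectors of sets are represented as lists; component i is xs ! i (0-based).\<close>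

definition nontrivial :: "'a set \<Rightarrow> 'a set set \<Rightarrow> bool" where
  "nontrivial S F \<longleftrightarrow> {} \<in> F \<and> S \<in> F \<and>
     (\<forall>Q\<in>F. \<forall>E. finite E \<and> E \<subseteq> S \<longrightarrow> Q \<union> E \<in> F \<and> Q - E \<in> F)"

definition pairwise_disj :: "'a set list \<Rightarrow> bool" where
  "pairwise_disj xs \<longleftrightarrow> (\<forall>i<length xs. \<forall>j<length xs. i \<noteq> j \<longrightarrow> xs ! i \<inter> xs ! j = {})"

definition class_problem :: "'a set \<Rightarrow> 'a set list \<Rightarrow> bool" where
  "class_problem S A \<longleftrightarrow> length A \<ge> 1 \<and> pairwise_disj A \<and>
     (\<forall>i<length A. infinite (A ! i) \<and> A ! i \<subseteq> S)"

definition cond_class_problem :: "'a set \<Rightarrow> 'a set \<Rightarrow> 'a set list \<Rightarrow> bool" where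
  "cond_class_problem S C A \<longleftrightarrow> C \<subseteq> S \<and> class_problem S A \<and>
     (\<forall>i<length A. C \<inter> A ! i = {})"

definition vec_le :: "'a set list \<Rightarrow> 'a set list \<Rightarrow> bool" where
  "vec_le B Q \<longleftrightarrow> 1 \<le> length B \<and> length B \<le> length Q \<and>
     (\<exists>\<sigma>. inj_on \<sigma> {..<length B} \<and> \<sigma> ` {..<length B} \<subseteq> {..<length Q} \<and>
          (\<forall>i<length B. B ! i \<subseteq> Q ! (\<sigma> i)))"

definition F_partition :: "'a set \<Rightarrow> 'a set set \<Rightarrow> 'a set list \<Rightarrow> bool" where
  "F_partition S F Q \<longleftrightarrow> pairwise_disj Q \<and> set Q \<subseteq> F \<and> \<Union>(set Q) = S"

definition cclass :: "'a set \<Rightarrow> nat \<Rightarrow> 'a set \<Rightarrow> 'a set set \<Rightarrow> 'a set list set" where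
  "cclass S k C F = {A. length A = k \<and> cond_class_problem S C A \<and>
     (\<exists>Q0 Qs. length Qs = k \<and> F_partition S F (Q0 # Qs) \<and> C \<subseteq> Q0 \<and> vec_le A Qs)}"

definition ccore :: "'a set \<Rightarrow> nat \<Rightarrow> 'a set \<Rightarrow> 'a set set \<Rightarrow> 'a set list set" where
  "ccore S k C F = {A. length A = k \<and> cond_class_problem S C A \<and>
     (\<forall>A'. class_problem S A' \<and> vec_le A' A \<longrightarrow> A' \<notin> cclass S (length A') C F)}"

definition ccohesive :: "'a set \<Rightarrow> 'a set \<Rightarrow> 'a set set \<Rightarrow> 'a set set" where
  "ccohesive S D F = {A. infinite A \<and>
     (\<forall>Q. Q \<subseteq> D \<and> Q \<in> F \<and> S - Q \<in> F \<longrightarrow> finite (A \<inter> Q) \<or> finite (A - Q))}"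

end

theory Submission
  imports Defs
begin

text \<open>A class of a core cannot be split by a complemented set of \<open>F\<close> avoiding \<open>C\<close>: the
  infinite part inside that set would already be conditionally classifiable, with the
  two-block partition (complement, set). Conversely, if some subproblem of \<open>A\<close> is
  classified, its first component lies infinitely inside a block \<open>Q\<close> whose complement is
  a finite union of blocks; by cohesiveness the corresponding class of \<open>A\<close> lies in \<open>Q\<close> up
  to a finite set \<open>E\<close>, and \<open>(S - Q - E, Q \<union> E)\<close> classifies that single class.\<close>

lemma Union_mem_if_Un_closed:
  assumes "finite X" "X \<subseteq> F" "{} \<in> F" "\<forall>P\<in>F. \<forall>Q\<in>F. P \<union> Q \<in> F"
  shows "\<Union>X \<in> F"
  using assms by (induction X rule: finite_induct) auto

lemma pairwise_disj_pair: "pairwise_disj [P, Q] \<longleftrightarrow> P \<inter> Q = {}"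
  unfolding pairwise_disj_def
  by (auto simp: less_Suc_eq nth_Cons split: nat.splits)

lemma pairwise_disj_nth_disjoint:
  assumes "pairwise_disj L" "P \<in> set L" "Q \<in> set L" "P \<noteq> Q"
  shows "P \<inter> Q = {}"
  using assms unfolding pairwise_disj_def in_set_conv_nth by blast

lemma F_partition_complement_mem:
  assumes "F_partition S F L" "Q \<in> set L"
    and "{} \<in> F" "\<forall>P\<in>F. \<forall>Q\<in>F. P \<union> Q \<in> F"
  shows "S - Q \<in> F"
proof -
  have disj: "pairwise_disj L" and LF: "set L \<subseteq> F" and LS: "\<Union>(set L) = S"
    using assms(1) unfolding F_partition_def by auto
  have "\<Union>(set L - {Q}) = S - Q"
    using LS pairwise_disj_nth_disjoint[OF disj _ assms(2)] by blast
  moreover have "\<Union>(set L - {Q}) \<in> F"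
    using LF assms(3,4) by (intro Union_mem_if_Un_closed) auto
  ultimately show ?thesis by simp
qed

lemma cond_class_problem_singleton:
  assumes "cond_class_problem S C A" "i < length A" "B \<subseteq> A ! i" "infinite B"
  shows "cond_class_problem S C [B]"
proof -
  have "A ! i \<subseteq> S" "C \<inter> A ! i = {}"
    using assms(1,2) unfolding cond_class_problem_def class_problem_def by auto
  then show ?thesis
    using assms(1,3,4) unfolding cond_class_problem_def class_problem_def pairwise_disj_def by auto
qed

lemma vec_le_singleton:
  assumes "i < length A" "B \<subseteq> A ! i"
  shows "vec_le [B] A"
  unfolding vec_le_def using assms
  by (intro conjI exI[of _ "\<lambda>_. i"]) (auto simp: lessThan_Suc)

lemma vec_le_hd_subset:
  assumes "vec_le B Q"
  obtains j where "j < length Q" "B ! 0 \<subseteq> Q ! j"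
proof -
  obtain \<sigma> where "1 \<le> length B" "\<sigma> ` {..<length B} \<subseteq> {..<length Q}"
    "\<forall>i<length B. B ! i \<subseteq> Q ! \<sigma> i"
    using assms unfolding vec_le_def by blast
  then show ?thesis using that[of "\<sigma> 0"] by (auto simp: Suc_le_eq)
qed

lemma cclass_singletonI:
  assumes "Q \<in> F" "S - Q \<in> F" "Q \<subseteq> S" "C \<inter> Q = {}" "B \<subseteq> Q"
    and "cond_class_problem S C [B]"
  shows "[B] \<in> cclass S 1 C F"
proof -
  have "C \<subseteq> S" using assms(6) unfolding cond_class_problem_def by blast
  then have "F_partition S F [S - Q, Q]" "C \<subseteq> S - Q"
    using assms unfolding F_partition_def pairwise_disj_pair by auto
  moreover have "vec_le [B] [Q]" using vec_le_singleton[of 0 "[Q]" B] assms(5) by simp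
  ultimately show ?thesis using assms(6) unfolding cclass_def
    by (intro CollectI conjI exI[of _ "S - Q"] exI[of _ "[Q]"]) auto
qed

lemma cclass_singleton_if_almost_subset:
  assumes "nontrivial S F" "Q \<in> F" "S - Q \<in> F" "Q \<subseteq> S - C"
    and "finite (B - Q)" "cond_class_problem S C [B]"
  shows "[B] \<in> cclass S 1 C F"
proof -
  have BS: "B \<subseteq> S" and BC: "C \<inter> B = {}"
    using assms(6) unfolding cond_class_problem_def class_problem_def by auto
  let ?E = "B - Q"
  have "Q \<union> ?E \<in> F" "(S - Q) - ?E \<in> F"
    using assms(1-3,5) BS unfolding nontrivial_def by blast+
  moreover have "S - (Q \<union> ?E) = (S - Q) - ?E" by blast
  ultimately show ?thesis
    using assms(4,6) BS BC by (intro cclass_singletonI[where Q = "Q \<union> ?E"]) auto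
qed

lemma ccore_singleton_not_cclass:
  assumes "A \<in> ccore S k C F" "i < length A" "B \<subseteq> A ! i" "infinite B"
  shows "[B] \<notin> cclass S 1 C F"
proof -
  have "cond_class_problem S C A" using assms(1) unfolding ccore_def by blast
  then have "class_problem S [B]"
    using cond_class_problem_singleton[OF _ assms(2-4)] unfolding cond_class_problem_def by blast
  moreover have "vec_le [B] A" using assms(2,3) by (rule vec_le_singleton)
  moreover have "\<forall>A'. class_problem S A' \<and> vec_le A' A \<longrightarrow> A' \<notin> cclass S (length A') C F"
    using assms(1) unfolding ccore_def by blast
  ultimately have "[B] \<notin> cclass S (length [B]) C F" by blast
  then show ?thesis by simp
qed

lemma ccore_class_ccohesive:
  assumes "A \<in> ccore S k C F" "i < length A"
  shows "A ! i \<in> ccohesive S (S - C) F"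
  unfolding ccohesive_def
proof (intro CollectI conjI allI impI)
  have ccp: "cond_class_problem S C A" using assms(1) unfolding ccore_def by blast
  then show "infinite (A ! i)" using assms(2) unfolding cond_class_problem_def class_problem_def
    by blast
  fix Q assume Q: "Q \<subseteq> S - C \<and> Q \<in> F \<and> S - Q \<in> F"
  show "finite (A ! i \<inter> Q) \<or> finite (A ! i - Q)"
  proof (rule ccontr)
    assume "\<not> ?thesis"
    then have inf: "infinite (A ! i \<inter> Q)" by blast
    have "[A ! i \<inter> Q] \<in> cclass S 1 C F"
      using Q cond_class_problem_singleton[OF ccp assms(2) _ inf]
      by (intro cclass_singletonI[where Q = Q]) auto
    then show False using ccore_singleton_not_cclass[OF assms(1,2) _ inf] by blast
  qed
qed

lemma cclass_below_splits_class:
  assumes "A' \<in> cclass S (length A') C F" "class_problem S A'" "vec_le A' A"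
    and "F \<subseteq> Pow S" "{} \<in> F" "\<forall>P\<in>F. \<forall>Q\<in>F. P \<union> Q \<in> F"
  obtains j Q where "j < length A" "Q \<in> F" "S - Q \<in> F" "Q \<subseteq> S - C"
    "infinite (A ! j \<inter> Q)"
proof -
  obtain Q0 Qs where part: "F_partition S F (Q0 # Qs)" and C: "C \<subseteq> Q0" and le: "vec_le A' Qs"
    using assms(1) unfolding cclass_def by blast
  obtain j where j: "j < length A" "A' ! 0 \<subseteq> A ! j" using assms(3) by (rule vec_le_hd_subset)
  obtain l where l: "l < length Qs" "A' ! 0 \<subseteq> Qs ! l" using le by (rule vec_le_hd_subset)
  let ?Q = "Qs ! l"
  have "?Q \<in> set (Q0 # Qs)" using l(1) by simp
  then have QF: "?Q \<in> F" and SQF: "S - ?Q \<in> F"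
    using part assms(5,6) F_partition_complement_mem unfolding F_partition_def by blast+
  have "Q0 \<inter> ?Q = {}"
    using part l(1) unfolding F_partition_def pairwise_disj_def
    by (metis Suc_less_eq length_Cons nat.distinct(1) nth_Cons_0 nth_Cons_Suc zero_less_Suc)
  then have QC: "?Q \<subseteq> S - C" using QF assms(4) C by blast
  have "infinite (A' ! 0)"
    using assms(2) unfolding class_problem_def by (auto simp: Suc_le_eq)
  then have "infinite (A ! j \<inter> ?Q)" using j(2) l(2) by (meson Int_greatest finite_subset)
  with j(1) QF SQF QC show ?thesis by (rule that)
qed

lemma ccore_if_classes_ccohesive:
  assumes "nontrivial S F" "F \<subseteq> Pow S" "\<forall>P\<in>F. \<forall>Q\<in>F. P \<union> Q \<in> F"
    and "cond_class_problem S C A"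
    and "\<forall>i<length A. [A ! i] \<notin> cclass S 1 C F \<and> A ! i \<in> ccohesive S (S - C) F"
  shows "A \<in> ccore S (length A) C F"
proof -
  have empty: "{} \<in> F" using assms(1) unfolding nontrivial_def by blast
  have "A' \<notin> cclass S (length A') C F" if A': "class_problem S A'" "vec_le A' A" for A'
  proof
    assume "A' \<in> cclass S (length A') C F"
    then obtain j Q where j: "j < length A" and Q: "Q \<in> F" "S - Q \<in> F" "Q \<subseteq> S - C"
      and inf: "infinite (A ! j \<inter> Q)"
      by (rule cclass_below_splits_class[OF _ A' assms(2) empty assms(3)])
    have coh: "A ! j \<in> ccohesive S (S - C) F" using assms(5) j by simp
    then have "finite (A ! j - Q)" using Q inf unfolding ccohesive_def by blast
    moreover have "cond_class_problem S C [A ! j]"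
      using coh cond_class_problem_singleton[OF assms(4) j subset_refl] unfolding ccohesive_def
      by blast
    ultimately have "[A ! j] \<in> cclass S 1 C F"
      by (rule cclass_singleton_if_almost_subset[OF assms(1) Q])
    then show False using assms(5) j by simp
  qed
  then show ?thesis using assms(4) unfolding ccore_def by blast
qed

theorem theorem4p4:
  fixes S :: "'a set" and F :: "'a set set" and C :: "'a set" and A :: "'a set list"
  assumes "infinite S"
    and "F \<subseteq> Pow S"
    and "nontrivial S F"
    and "\<forall>P\<in>F. \<forall>Q\<in>F. P \<union> Q \<in> F"
    and "cond_class_problem S C A"
    and "k = length A"
  shows "A \<in> ccore S k C F \<longleftrightarrow>
    (\<forall>i<k. [A ! i] \<notin> cclass S 1 C F \<and> A ! i \<in> ccohesive S (S - C) F)"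
proof
  assume core: "A \<in> ccore S k C F"
  show "\<forall>i<k. [A ! i] \<notin> cclass S 1 C F \<and> A ! i \<in> ccohesive S (S - C) F"
  proof (intro allI impI conjI)
    fix i assume "i < k"
    then have i: "i < length A" using assms(6) by simp
    show "A ! i \<in> ccohesive S (S - C) F" using ccore_class_ccohesive[OF core i] .
    then have "infinite (A ! i)" unfolding ccohesive_def by blast
    then show "[A ! i] \<notin> cclass S 1 C F" by (rule ccore_singleton_not_cclass[OF core i subset_refl])
  qed
next
  assume "\<forall>i<k. [A ! i] \<notin> cclass S 1 C F \<and> A ! i \<in> ccohesive S (S - C) F"
  then show "A \<in> ccore S k C F"
    using ccore_if_classes_ccohesive[OF assms(3,2,4,5)] assms(6) by simp
qed

end
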